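(* For every connected graph $\hat G$ on $n$ vertices with maximum degree $\Delta$ and treewidth $\mathrm{tw}$, $$\mathrm{OPT}(\hat G)=O\big(\Delta(\Delta+\mathrm{tw}\log n)\,n\log n\big).$$
   Context: Let $\hat G=(V,\hat E)$ be a connected unweighted graph with shortest-path metric $\hat\delta$. Let $\widehat{\mathit{NE}}$ be the set of unordered pairs $\{a,b\}$ of distinct vertices with $\{a,b\}\notin\hat E$. For $(u,v)\in V^2$, let $S_{u,v}$ be the set of $\{a,b\}\in\widehat{\mathit{NE}}$ such that $\hat\delta(u,a)+\hat\delta(b,v)+1<\hat\delta(u,v)$ or $\hat\delta(u,b)+\hat\delta(a,v)+1<\hat\delta(u,v)$. Define $\mathrm{OPT}(\hat G)$ as the minimum cardinality of a set $T\subseteq V\times V$ such that $\bigcup_{(u,v)\in T}S_{u,v}=\widehat{\mathit{NE}}$. Treewidth is defined via tree decompositions: the width of a decomposition is the maximum bag size minus one. *)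

theory Defs
  imports Complex_Main
begin

definition simple_graph :: "nat set \<Rightarrow> nat set set \<Rightarrow> bool" where
  "simple_graph V E \<longleftrightarrow> finite V \<and> (\<forall>e\<in>E. \<exists>a b. e = {a, b} \<and> a \<noteq> b \<and> a \<in> V \<and> b \<in> V)"

definition is_walk :: "nat set \<Rightarrow> nat set set \<Rightarrow> nat list \<Rightarrow> bool" where
  "is_walk V E xs \<longleftrightarrow> xs \<noteq> [] \<and> set xs \<subseteq> V \<and>
     (\<forall>i. i + 1 < length xs \<longrightarrow> {xs ! i, xs ! (i + 1)} \<in> E)"

definition connected_graph :: "nat set \<Rightarrow> nat set set \<Rightarrow> bool" where
  "connected_graph V E \<longleftrightarrow> V \<noteq> {} \<and>
     (\<forall>u\<in>V. \<forall>v\<in>V. \<exists>xs. is_walk V E xs \<and> hd xs = u \<and> last xs = v)"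

definition gdist :: "nat set \<Rightarrow> nat set set \<Rightarrow> nat \<Rightarrow> nat \<Rightarrow> nat" where
  "gdist V E u v = (LEAST k. \<exists>xs. is_walk V E xs \<and> hd xs = u \<and> last xs = v \<and> length xs = k + 1)"

definition degree :: "nat set set \<Rightarrow> nat \<Rightarrow> nat" where
  "degree E u = card {v. {u, v} \<in> E}"

definition max_degree :: "nat set \<Rightarrow> nat set set \<Rightarrow> nat" where
  "max_degree V E = Max (degree E ` V)"

definition non_edges :: "nat set \<Rightarrow> nat set set \<Rightarrow> nat set set" where
  "non_edges V E = {{a, b} | a b. a \<in> V \<and> b \<in> V \<and> a \<noteq> b \<and> {a, b} \<notin> E}"

definition S_set :: "nat set \<Rightarrow> nat set set \<Rightarrow> nat \<Rightarrow> nat \<Rightarrow> nat set set" where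
  "S_set V E u v = {p \<in> non_edges V E. \<exists>a b. p = {a, b} \<and>
      (gdist V E u a + gdist V E b v + 1 < gdist V E u v \<or>
       gdist V E u b + gdist V E a v + 1 < gdist V E u v)}"

definition OPT :: "nat set \<Rightarrow> nat set set \<Rightarrow> nat" where
  "OPT V E = (LEAST m. \<exists>T. T \<subseteq> V \<times> V \<and> finite T \<and> card T = m \<and>
      (\<Union>(u, v)\<in>T. S_set V E u v) = non_edges V E)"

definition is_tree :: "nat set \<Rightarrow> nat set set \<Rightarrow> bool" where
  "is_tree I F \<longleftrightarrow> simple_graph I F \<and> connected_graph I F \<and> finite F \<and> card F + 1 = card I"

definition tree_decomposition ::
  "nat set \<Rightarrow> nat set set \<Rightarrow> nat set \<Rightarrow> nat set set \<Rightarrow> (nat \<Rightarrow> nat set) \<Rightarrow> bool" where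
  "tree_decomposition V E I F B \<longleftrightarrow> is_tree I F \<and>
     (\<Union>i\<in>I. B i) = V \<and>
     (\<forall>e\<in>E. \<exists>i\<in>I. e \<subseteq> B i) \<and>
     (\<forall>v\<in>V. connected_graph {i \<in> I. v \<in> B i} F)"

definition decomposition_width :: "nat set \<Rightarrow> (nat \<Rightarrow> nat set) \<Rightarrow> nat" where
  "decomposition_width I B = Max ((\<lambda>i. card (B i)) ` I) - 1"

definition treewidth :: "nat set \<Rightarrow> nat set set \<Rightarrow> nat" where
  "treewidth V E = (LEAST w. \<exists>I F B. tree_decomposition V E I F B \<and> decomposition_width I B = w)"

end

theory Submission
  imports Defs
begin

text \<open>A tree decomposition of width tw gives every vertex set U a separator S of at most tw + 1
  vertices such that each component of U - S has at most half of the vertices of U (Helly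
  property of subtrees of a tree). A shortest path inside U either avoids S, and then lies in one
  component, or passes through a vertex of S; then the non-edge joining its end points a, b lies
  in S_set a s or in S_set s b for some s in the closed neighbourhood of S. Recursing on the
  components uses 2 (tw + 1) (Delta + 1) |U| pairs per level over log n + 1 levels, hence
  OPT <= 2 (tw + 1) (Delta + 1) n (log n + 1), which is even below the claimed bound.\<close>

section \<open>Walks and distances\<close>

lemma is_walk_iff_successively:
  "is_walk V E xs \<longleftrightarrow> xs \<noteq> [] \<and> set xs \<subseteq> V \<and> successively (\<lambda>x y. {x, y} \<in> E) xs"
  unfolding is_walk_def successively_conv_nth by simp

lemma is_walk_rev: "is_walk V E xs \<Longrightarrow> is_walk V E (rev xs)"
  unfolding is_walk_iff_successively by (auto simp: insert_commute)

lemma is_walk_append: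
  assumes "is_walk V E xs" "is_walk V E ys" "last xs = hd ys"
  shows "is_walk V E (xs @ tl ys)"
proof -
  from assms(2) obtain y ys' where ys: "ys = y # ys'"
    unfolding is_walk_def by (cases ys) auto
  have "successively (\<lambda>x y. {x, y} \<in> E) (xs @ ys')"
    using assms unfolding is_walk_iff_successively ys
    by (auto simp: successively_append_iff successively_Cons)
  then show ?thesis using assms unfolding is_walk_iff_successively ys by auto
qed

lemma is_walk_take: "is_walk V E xs \<Longrightarrow> 0 < j \<Longrightarrow> is_walk V E (take j xs)"
  using successively_append_iff[of _ "take j xs" "drop j xs"]
  unfolding is_walk_iff_successively by (auto dest: in_set_takeD)

lemma is_walk_drop: "is_walk V E xs \<Longrightarrow> j < length xs \<Longrightarrow> is_walk V E (drop j xs)"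
  using successively_append_iff[of _ "take j xs" "drop j xs"]
  unfolding is_walk_iff_successively by (auto dest: in_set_dropD)

definition geodesic :: "nat set \<Rightarrow> nat set set \<Rightarrow> nat list \<Rightarrow> nat \<Rightarrow> nat \<Rightarrow> bool" where
  "geodesic V E P a b \<longleftrightarrow>
     is_walk V E P \<and> hd P = a \<and> last P = b \<and> length P = gdist V E a b + 1"

lemma geodesic_set:
  assumes "geodesic V E P a b"
  shows "P \<noteq> []" "set P \<subseteq> V" "a \<in> V" "b \<in> V"
  using assms hd_in_set last_in_set unfolding geodesic_def is_walk_def by blast+

lemma gdist_le_walk:
  assumes "is_walk V E xs" "hd xs = u" "last xs = v"
  shows "gdist V E u v \<le> length xs - 1"
  unfolding gdist_def
  by (rule Least_le) (use assms in \<open>auto simp: is_walk_def intro!: exI[of _ xs]\<close>)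

lemma geodesic_exists:
  assumes "connected_graph V E" "u \<in> V" "v \<in> V"
  obtains P where "geodesic V E P u v"
proof -
  from assms obtain xs where xs: "is_walk V E xs" "hd xs = u" "last xs = v"
    unfolding connected_graph_def by blast
  then have "\<exists>k xs. is_walk V E xs \<and> hd xs = u \<and> last xs = v \<and> length xs = k + 1"
    by (intro exI[of _ "length xs - 1"] exI[of _ xs]) (auto simp: is_walk_def)
  then have "\<exists>P. geodesic V E P u v"
    unfolding geodesic_def gdist_def by (rule LeastI_ex)
  then show ?thesis using that by blast
qed

lemma gdist_refl: "a \<in> V \<Longrightarrow> gdist V E a a = 0"
  using gdist_le_walk[of V E "[a]" a a] by (simp add: is_walk_def)

lemma gdist_commute:
  assumes "connected_graph V E" "u \<in> V" "v \<in> V"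
  shows "gdist V E v u = gdist V E u v"
proof -
  have "gdist V E y x \<le> gdist V E x y" if xy: "x \<in> V" "y \<in> V" for x y
  proof -
    obtain P where P: "geodesic V E P x y" using geodesic_exists[OF assms(1) xy] .
    then have "P \<noteq> []" by (rule geodesic_set)
    then have "hd (rev P) = y" "last (rev P) = x"
      using P unfolding geodesic_def by (simp_all add: hd_rev last_rev)
    then show ?thesis
      using gdist_le_walk[OF is_walk_rev] P unfolding geodesic_def by fastforce
  qed
  then show ?thesis using assms(2,3) by (simp add: order_antisym)
qed

lemma gdist_triangle:
  assumes "connected_graph V E" "u \<in> V" "v \<in> V" "w \<in> V"
  shows "gdist V E u w \<le> gdist V E u v + gdist V E v w"
proof -
  obtain P where P: "geodesic V E P u v" using geodesic_exists assms(1,2,3) .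
  obtain Q where Q: "geodesic V E Q v w" using geodesic_exists assms(1,3,4) .
  have "P \<noteq> []" "Q \<noteq> []" using P Q by (blast dest: geodesic_set)+
  then have "hd (P @ tl Q) = u" "last (P @ tl Q) = w"
    using P Q unfolding geodesic_def by (auto simp: last_append last_tl) (metis last_ConsL list.collapse)
  with gdist_le_walk[OF is_walk_append] show ?thesis
    using P Q unfolding geodesic_def by fastforce
qed

lemma two_le_gdist_non_edge:
  assumes "connected_graph V E" "a \<in> V" "b \<in> V" "a \<noteq> b" "{a, b} \<notin> E"
  shows "2 \<le> gdist V E a b"
proof (rule ccontr)
  assume "\<not> 2 \<le> gdist V E a b"
  moreover obtain P where P: "geodesic V E P a b" using geodesic_exists assms(1-3) .
  ultimately have "P = [a] \<or> (\<exists>x y. P = [x, y])"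
    unfolding geodesic_def is_walk_def
    by (cases P; cases "tl P"; cases "tl (tl P)") auto
  then consider "P = [a]" | x y where "P = [x, y]" by blast
  then show False
  proof cases
    case 1
    then show False using P assms(4) unfolding geodesic_def by simp
  next
    case 2
    then show False using P assms(5) unfolding geodesic_def is_walk_def by auto
  qed
qed

lemma gdist_along_geodesic:
  assumes "connected_graph V E" "geodesic V E P a b" "j < length P"
  shows "gdist V E a (P ! j) = j" "gdist V E (P ! j) b = gdist V E a b - j"
proof -
  have V: "a \<in> V" "b \<in> V" "P ! j \<in> V"
    using geodesic_set[OF assms(2)] assms(3) nth_mem by blast+
  have P: "is_walk V E P" "hd P = a" "last P = b" "length P = gdist V E a b + 1" "P \<noteq> []"
    using assms(2) geodesic_set(1) unfolding geodesic_def by blast+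
  have "last (take (Suc j) P) = P ! j" using assms(3) by (simp add: take_Suc_conv_app_nth)
  moreover have "hd (take (Suc j) P) = a" using P(2,5) by (cases P) auto
  ultimately have "gdist V E a (P ! j) \<le> length (take (Suc j) P) - 1"
    using gdist_le_walk[OF is_walk_take[OF P(1) zero_less_Suc]] by blast
  then have before: "gdist V E a (P ! j) \<le> j" using assms(3) by simp
  have "hd (drop j P) = P ! j" "last (drop j P) = b"
    using assms(3) P(3) by (simp_all add: hd_drop_conv_nth)
  then have "gdist V E (P ! j) b \<le> length (drop j P) - 1"
    using gdist_le_walk[OF is_walk_drop[OF P(1) assms(3)]] by blast
  then have after: "gdist V E (P ! j) b \<le> gdist V E a b - j" using P(4) by simp
  have "gdist V E a b \<le> gdist V E a (P ! j) + gdist V E (P ! j) b"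
    using gdist_triangle[OF assms(1) V(1,3,2)] .
  then show "gdist V E a (P ! j) = j" "gdist V E (P ! j) b = gdist V E a b - j"
    using before after assms(3) P(4) by linarith+
qed

definition adj_in :: "nat set \<Rightarrow> nat set set \<Rightarrow> nat \<Rightarrow> nat \<Rightarrow> bool" where
  "adj_in X F x y \<longleftrightarrow> x \<in> X \<and> y \<in> X \<and> {x, y} \<in> F"

definition connected_on :: "nat set \<Rightarrow> nat set set \<Rightarrow> bool" where
  "connected_on X F \<longleftrightarrow> X \<noteq> {} \<and> (\<forall>x\<in>X. \<forall>y\<in>X. (adj_in X F)\<^sup>*\<^sup>* x y)"

lemma adj_in_rtranclp_sym: "(adj_in X F)\<^sup>*\<^sup>* a b \<Longrightarrow> (adj_in X F)\<^sup>*\<^sup>* b a"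
proof (induction rule: rtranclp_induct)
  case (step b c)
  then have "adj_in X F c b" by (auto simp: adj_in_def insert_commute)
  then show ?case using step.IH by (rule converse_rtranclp_into_rtranclp)
qed simp

lemma adj_in_rtranclp_mono: "X \<subseteq> Y \<Longrightarrow> (adj_in X F)\<^sup>*\<^sup>* x y \<Longrightarrow> (adj_in Y F)\<^sup>*\<^sup>* x y"
  by (erule rtranclp_mono[THEN predicate2D, rotated]) (auto simp: adj_in_def)

lemma adj_in_rtranclp_mem: "(adj_in X F)\<^sup>*\<^sup>* x y \<Longrightarrow> x \<in> X \<Longrightarrow> y \<in> X"
  by (induction rule: rtranclp_induct) (auto simp: adj_in_def)

lemma is_walk_reaches_last: "is_walk X F xs \<Longrightarrow> (adj_in X F)\<^sup>*\<^sup>* (hd xs) (last xs)"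
proof (induction xs)
  case (Cons x xs)
  show ?case
  proof (cases xs)
    case (Cons y ys)
    with Cons.prems have "adj_in X F x y" "is_walk X F xs"
      by (auto simp: adj_in_def is_walk_iff_successively)
    with Cons.IH \<open>xs = y # ys\<close> show ?thesis by (auto intro: converse_rtranclp_into_rtranclp)
  qed simp
qed (simp add: is_walk_def)

lemma is_walk_reaches_nth:
  assumes "is_walk X F xs" "j < length xs"
  shows "(adj_in X F)\<^sup>*\<^sup>* (hd xs) (xs ! j)"
proof -
  have "last (take (Suc j) xs) = xs ! j" using assms(2) by (simp add: take_Suc_conv_app_nth)
  moreover have "hd (take (Suc j) xs) = hd xs" using assms(2) by (cases xs) auto
  ultimately show ?thesis
    using is_walk_reaches_last[OF is_walk_take[OF assms(1) zero_less_Suc, of j]] by simp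
qed

lemma connected_graph_imp_connected_on: "connected_graph X F \<Longrightarrow> connected_on X F"
  unfolding connected_graph_def connected_on_def using is_walk_reaches_last by fastforce

definition graph_component :: "nat set set \<Rightarrow> nat set \<Rightarrow> nat \<Rightarrow> nat set" where
  "graph_component E W x = {y. (adj_in W E)\<^sup>*\<^sup>* x y}"

lemma graph_component_subset: "x \<in> W \<Longrightarrow> graph_component E W x \<subseteq> W"
  unfolding graph_component_def using adj_in_rtranclp_mem by blast

lemma graph_component_self: "x \<in> graph_component E W x"
  unfolding graph_component_def by simp

lemma graph_component_eqI:
  assumes "z \<in> graph_component E W x" "z \<in> graph_component E W y"
  shows "graph_component E W x = graph_component E W y"
proof -
  have xz: "(adj_in W E)\<^sup>*\<^sup>* x z" and yz: "(adj_in W E)\<^sup>*\<^sup>* y z"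
    using assms unfolding graph_component_def by simp_all
  have xy: "(adj_in W E)\<^sup>*\<^sup>* x y" by (rule rtranclp_trans[OF xz adj_in_rtranclp_sym[OF yz]])
  have yx: "(adj_in W E)\<^sup>*\<^sup>* y x" by (rule adj_in_rtranclp_sym[OF xy])
  show ?thesis
    unfolding graph_component_def using rtranclp_trans[OF xy] rtranclp_trans[OF yx] by blast
qed

lemma is_walk_set_subset_graph_component:
  assumes "is_walk W E P"
  shows "set P \<subseteq> graph_component E W (hd P)"
proof
  fix y assume "y \<in> set P"
  then obtain j where "j < length P" "y = P ! j" by (auto simp: in_set_conv_nth)
  then show "y \<in> graph_component E W (hd P)"
    using is_walk_reaches_nth[OF assms] unfolding graph_component_def by simp
qed

lemma sum_card_graph_components:
  assumes "finite W"
  shows "(\<Sum>C\<in>graph_component E W ` W. card C) = card W"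
proof -
  have "pairwise disjnt (graph_component E W ` W)"
  proof (rule pairwiseI)
    fix C D assume "C \<in> graph_component E W ` W" "D \<in> graph_component E W ` W" "C \<noteq> D"
    then obtain x y where "C = graph_component E W x" "D = graph_component E W y"
      by (elim imageE) simp
    with \<open>C \<noteq> D\<close> show "disjnt C D"
      unfolding disjnt_def using graph_component_eqI[of _ E W x y] by auto
  qed
  moreover have "finite (graph_component E W x)" if "x \<in> W" for x
    using finite_subset[OF graph_component_subset[OF that] assms] .
  ultimately have "card (\<Union> (graph_component E W ` W)) = (\<Sum>C\<in>graph_component E W ` W. card C)"
    by (intro card_Union_disjoint) blast+
  moreover have "\<Union> (graph_component E W ` W) = W"
    using graph_component_subset graph_component_self by auto
  ultimately show ?thesis by simp
qed

section \<open>Trees and the Helly property of subtrees\<close>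

definition tree_on :: "nat set \<Rightarrow> nat set set \<Rightarrow> bool" where
  "tree_on I F \<longleftrightarrow> simple_graph I F \<and> connected_on I F \<and> finite F \<and> card F + 1 = card I"

lemma is_tree_imp_tree_on: "is_tree I F \<Longrightarrow> tree_on I F"
  unfolding is_tree_def tree_on_def using connected_graph_imp_connected_on by blast

lemma singleton_notin_edges:
  assumes "simple_graph V E"
  shows "{x} \<notin> E"
proof
  assume "{x} \<in> E"
  then obtain a b where "{x} = {a, b}" "a \<noteq> b" using assms unfolding simple_graph_def by blast
  moreover from this(1) have "a = x" "b = x" by auto
  ultimately show False by simp
qed

lemma edge_subset_vertices: "simple_graph V E \<Longrightarrow> e \<in> E \<Longrightarrow> e \<subseteq> V"
  unfolding simple_graph_def by fastforce

lemma sum_card_incident_edges: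
  assumes "simple_graph V E" "finite E"
  shows "(\<Sum>v\<in>V. card {e\<in>E. v \<in> e}) = 2 * card E"
proof -
  have "(\<Sum>v\<in>V. card {e\<in>E. v \<in> e}) = (\<Sum>v\<in>V. \<Sum>e\<in>E. if v \<in> e then 1 else 0)"
    using assms(2) by (simp add: sum.If_cases Int_def)
  also have "\<dots> = (\<Sum>e\<in>E. \<Sum>v\<in>V. if v \<in> e then 1 else 0)" by (rule sum.swap)
  also have "\<dots> = (\<Sum>e\<in>E. 2)"
  proof (rule sum.cong[OF refl])
    fix e assume "e \<in> E"
    then obtain a b where e: "e = {a, b}" "a \<noteq> b" "a \<in> V" "b \<in> V"
      using assms(1) unfolding simple_graph_def by blast
    then have "V \<inter> e = {a, b}" by auto
    moreover have "finite V" using assms(1) unfolding simple_graph_def by simp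
    ultimately show "(\<Sum>v\<in>V. if v \<in> e then 1 else 0) = (2::nat)"
      using e(2) by (simp add: sum.If_cases)
  qed
  finally show ?thesis by simp
qed

lemma connected_on_incident_edge:
  assumes "connected_on X F" "i \<in> X" "j \<in> X" "j \<noteq> i"
  shows "{e\<in>F. i \<in> e} \<noteq> {}"
proof -
  have "(adj_in X F)\<^sup>*\<^sup>* i j" using assms unfolding connected_on_def by blast
  then obtain z where "adj_in X F i z" using assms(4) by (blast elim: converse_rtranclpE)
  then show ?thesis by (auto simp: adj_in_def)
qed

lemma tree_on_has_leaf:
  assumes "tree_on I F" "2 \<le> card I"
  obtains l p where "l \<in> I" "{l, p} \<in> F" "l \<noteq> p" "\<forall>q. {l, q} \<in> F \<longrightarrow> q = p"
proof -
  have sg: "simple_graph I F" and fin: "finite I" "finite F" and cn: "connected_on I F"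
    and cd: "card F + 1 = card I"
    using assms(1) unfolding tree_on_def simple_graph_def by auto
  have incident: "1 \<le> card {e\<in>F. i \<in> e}" if "i \<in> I" for i
  proof -
    have "\<not> I \<subseteq> {i}" using assms(2) card_mono[of "{i}" I] by auto
    then obtain j where "j \<in> I" "j \<noteq> i" by blast
    then have "{e\<in>F. i \<in> e} \<noteq> {}" by (rule connected_on_incident_edge[OF cn that])
    then show ?thesis using fin(2) by (simp add: Suc_le_eq card_gt_0_iff)
  qed
  have "\<exists>l\<in>I. card {e\<in>F. l \<in> e} < 2"
  proof (rule ccontr)
    assume "\<not> ?thesis"
    then have "(\<Sum>i\<in>I. 2) \<le> (\<Sum>i\<in>I. card {e\<in>F. i \<in> e})" by (intro sum_mono) (auto simp: not_less)
    then show False using sum_card_incident_edges[OF sg fin(2)] cd by simp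
  qed
  then obtain l where l: "l \<in> I" "card {e\<in>F. l \<in> e} = 1" using incident by fastforce
  then obtain e0 where e0: "{e\<in>F. l \<in> e} = {e0}" by (meson card_1_singletonE)
  then have "e0 \<in> F" "l \<in> e0" by auto
  then obtain a b where ab: "e0 = {a, b}" "a \<noteq> b" using sg unfolding simple_graph_def by blast
  define p where "p = (if l = a then b else a)"
  have p: "e0 = {l, p}" "l \<noteq> p" using \<open>l \<in> e0\<close> ab unfolding p_def by auto
  have "\<forall>q. {l, q} \<in> F \<longrightarrow> q = p"
  proof (intro allI impI)
    fix q assume "{l, q} \<in> F"
    then have "{l, q} \<in> {e\<in>F. l \<in> e}" by simp
    then have "{l, q} = {l, p}" using e0 p by simp
    then show "q = p" using p by (metis doubleton_eq_iff)
  qed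
  then show ?thesis using that l p \<open>e0 \<in> F\<close> by blast
qed

context
  fixes I F l p
  assumes tree: "tree_on I F" and leaf: "l \<in> I" "{l, p} \<in> F" "l \<noteq> p"
    and leaf_unique: "\<forall>q. {l, q} \<in> F \<longrightarrow> q = p"
begin

lemma leaf_edge_eq: "{l, q} \<in> F \<Longrightarrow> q = p" "{q, l} \<in> F \<Longrightarrow> q = p"
  using leaf_unique by (auto simp: insert_commute)

lemma adj_in_rtranclp_remove_leaf:
  assumes "(adj_in Y F)\<^sup>*\<^sup>* a b" "a \<noteq> l"
  shows "(adj_in (Y - {l}) (F - {{l, p}}))\<^sup>*\<^sup>* a (if b = l then p else b)"
  using assms(1)
proof (induction rule: rtranclp_induct)
  case (step b c)
  have bc: "b \<in> Y" "c \<in> Y" "{b, c} \<in> F" using step.hyps(2) by (auto simp: adj_in_def)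
  show ?case
  proof (cases "c = l")
    case True
    have "b \<noteq> l" using bc True singleton_notin_edges tree unfolding tree_on_def by fastforce
    moreover have "b = p" using bc True leaf_edge_eq(2) by simp
    ultimately show ?thesis using step.IH True by simp
  next
    case c: False
    show ?thesis
    proof (cases "b = l")
      case True
      then have "c = p" using bc leaf_edge_eq(1) by simp
      then show ?thesis using step.IH True leaf(3) by simp
    next
      case False
      then have "{b, c} \<noteq> {l, p}" using c by (metis doubleton_eq_iff)
      then have "adj_in (Y - {l}) (F - {{l, p}}) b c" using bc c False by (auto simp: adj_in_def)
      then show ?thesis using step.IH c False by (simp add: rtranclp.rtrancl_into_rtrancl)
    qed
  qed
qed (use assms(2) in simp)

lemma connected_on_remove_leaf:
  assumes "connected_on X F" "X - {l} \<noteq> {}"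
  shows "connected_on (X - {l}) (F - {{l, p}})"
  unfolding connected_on_def
proof (intro conjI ballI)
  fix x y assume xy: "x \<in> X - {l}" "y \<in> X - {l}"
  then have "(adj_in X F)\<^sup>*\<^sup>* x y" using assms(1) unfolding connected_on_def by blast
  with adj_in_rtranclp_remove_leaf[OF this] xy
  show "(adj_in (X - {l}) (F - {{l, p}}))\<^sup>*\<^sup>* x y" by simp
qed (fact assms(2))

lemma leaf_neighbour_mem:
  assumes "connected_on X F" "l \<in> X" "y \<in> X" "y \<noteq> l"
  shows "p \<in> X"
proof -
  have "(adj_in X F)\<^sup>*\<^sup>* l y" using assms unfolding connected_on_def by blast
  then obtain z where "adj_in X F l z" using assms(4) by (blast elim: converse_rtranclpE)
  then show ?thesis using leaf_unique unfolding adj_in_def by blast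
qed

lemma tree_on_remove_leaf: "tree_on (I - {l}) (F - {{l, p}})"
proof -
  have sg: "simple_graph I F" and cn: "connected_on I F" and fin: "finite I" "finite F"
    and cd: "card F + 1 = card I"
    using tree unfolding tree_on_def simple_graph_def by auto
  have "p \<in> I" using edge_subset_vertices[OF sg leaf(2)] by simp
  then have cn': "connected_on (I - {l}) (F - {{l, p}})"
    using connected_on_remove_leaf[OF cn] leaf(3) by blast
  have "simple_graph (I - {l}) (F - {{l, p}})"
    unfolding simple_graph_def
  proof (intro conjI ballI)
    fix e assume e: "e \<in> F - {{l, p}}"
    then obtain a b where ab: "e = {a, b}" "a \<noteq> b" "a \<in> I" "b \<in> I"
      using sg unfolding simple_graph_def by blast
    have "a \<noteq> l" using e ab leaf_edge_eq(1) by auto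
    moreover have "b \<noteq> l" using e ab leaf_edge_eq(2) by auto
    ultimately show "\<exists>a b. e = {a, b} \<and> a \<noteq> b \<and> a \<in> I - {l} \<and> b \<in> I - {l}" using ab by blast
  qed (use fin in simp)
  moreover have "card F > 0" using fin(2) leaf(2) by (auto simp: card_gt_0_iff)
  then have "card (F - {{l, p}}) + 1 = card (I - {l})"
    using cd fin leaf by (simp add: card_Diff_singleton)
  ultimately show ?thesis using cn' fin unfolding tree_on_def by simp
qed

lemma connected_on_retract_leaf:
  assumes "connected_on X F" "X \<subseteq> I"
  shows "(\<lambda>x. if x = l then p else x) ` X \<subseteq> I - {l}"
    and "connected_on ((\<lambda>x. if x = l then p else x) ` X) (F - {{l, p}})"
proof -
  have pI: "p \<in> I" using edge_subset_vertices[OF _ leaf(2)] tree unfolding tree_on_def by blast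
  have "(\<lambda>x. if x = l then p else x) ` X \<subseteq> I - {l} \<and>
        connected_on ((\<lambda>x. if x = l then p else x) ` X) (F - {{l, p}})"
  proof (cases "X = {l}")
    case True
    then show ?thesis using pI leaf(3) by (simp add: connected_on_def)
  next
    case False
    have ne: "X - {l} \<noteq> {}" using False assms(1) unfolding connected_on_def by blast
    have "(\<lambda>x. if x = l then p else x) ` X = X - {l}"
    proof (cases "l \<in> X")
      case True
      then have "p \<in> X" using ne leaf_neighbour_mem[OF assms(1)] by blast
      then show ?thesis using leaf(3) by (auto simp: image_iff)
    qed (auto simp: image_iff)
    then show ?thesis using connected_on_remove_leaf[OF assms(1) ne] assms(2) by auto
  qed
  then show "(\<lambda>x. if x = l then p else x) ` X \<subseteq> I - {l}"
    and "connected_on ((\<lambda>x. if x = l then p else x) ` X) (F - {{l, p}})" by blast+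
qed

lemma common_node_from_retract_leaf:
  assumes "\<And>X. X \<in> \<X> \<Longrightarrow> connected_on X F" "\<And>X Y. X \<in> \<X> \<Longrightarrow> Y \<in> \<X> \<Longrightarrow> X \<inter> Y \<noteq> {}"
    and "k \<in> I" "\<And>X. X \<in> \<X> \<Longrightarrow> k \<in> (\<lambda>x. if x = l then p else x) ` X"
  shows "\<exists>k\<in>I. \<forall>X\<in>\<X>. k \<in> X"
proof (cases "\<forall>X\<in>\<X>. k \<in> X")
  case False
  then obtain X0 where X0: "X0 \<in> \<X>" "k \<notin> X0" by blast
  obtain x where "x \<in> X0" "k = (if x = l then p else x)" using assms(4)[OF X0(1)] by blast
  then have "l \<in> X0" "p \<notin> X0" using X0(2) by (auto split: if_splits)
  then have "X0 = {l}" using leaf_neighbour_mem[OF assms(1)[OF X0(1)]] by blast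
  then have "l \<in> X" if "X \<in> \<X>" for X using assms(2)[OF X0(1) that] by blast
  then show ?thesis using leaf(1) by blast
qed (use assms(3) in blast)

end

text \<open>Contracting a leaf onto its neighbour keeps subtrees subtrees and preserves intersections.
  A node common to the contracted family is common to the original one, unless it is the
  neighbour and some member is the singleton consisting of the leaf.\<close>

lemma helly_subtrees:
  assumes "tree_on I F"
    and "\<And>X. X \<in> \<X> \<Longrightarrow> X \<subseteq> I" "\<And>X. X \<in> \<X> \<Longrightarrow> connected_on X F"
    and "\<And>X Y. X \<in> \<X> \<Longrightarrow> Y \<in> \<X> \<Longrightarrow> X \<inter> Y \<noteq> {}"
  shows "\<exists>k\<in>I. \<forall>X\<in>\<X>. k \<in> X"
  using assms
proof (induction "card I" arbitrary: I F \<X> rule: less_induct)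
  case less
  have fin: "finite I" and "I \<noteq> {}"
    using less.prems(1) unfolding tree_on_def simple_graph_def connected_on_def by auto
  show ?case
  proof (cases "card I < 2")
    case True
    then have "card I = 1" using fin \<open>I \<noteq> {}\<close> by (simp add: less_2_cases_iff)
    then obtain k where "I = {k}" by (meson card_1_singletonE)
    have "k \<in> X" if "X \<in> \<X>" for X
      using less.prems(2,3)[OF that] \<open>I = {k}\<close> unfolding connected_on_def by blast
    then show ?thesis using \<open>I = {k}\<close> by blast
  next
    case False
    then have "2 \<le> card I" by simp
    then obtain l p where leaf: "l \<in> I" "{l, p} \<in> F" "l \<noteq> p" "\<forall>q. {l, q} \<in> F \<longrightarrow> q = p"
      by (rule tree_on_has_leaf[OF less.prems(1)])
    define r where "r = (\<lambda>x. if x = l then p else x)"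
    have retract: "r ` X \<subseteq> I - {l}" "connected_on (r ` X) (F - {{l, p}})" if "X \<in> \<X>" for X
      using connected_on_retract_leaf[OF less.prems(1) leaf less.prems(3,2)[OF that]]
      unfolding r_def by simp_all
    have "\<exists>k\<in>I - {l}. \<forall>X'\<in>(`) r ` \<X>. k \<in> X'"
    proof (rule less.hyps)
      show "card (I - {l}) < card I" using fin leaf(1) by (rule card_Diff1_less)
      show "tree_on (I - {l}) (F - {{l, p}})" by (rule tree_on_remove_leaf[OF less.prems(1) leaf])
      fix X' assume "X' \<in> (`) r ` \<X>"
      then obtain X where X: "X \<in> \<X>" "X' = r ` X" by blast
      show "X' \<subseteq> I - {l}" "connected_on X' (F - {{l, p}})"
        using retract[OF X(1)] X(2) by simp_all
      fix Y' assume "Y' \<in> (`) r ` \<X>"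
      then obtain Y where Y: "Y \<in> \<X>" "Y' = r ` Y" by blast
      obtain z where "z \<in> X" "z \<in> Y" using less.prems(4)[OF X(1) Y(1)] by blast
      then show "X' \<inter> Y' \<noteq> {}" using X(2) Y(2) by blast
    qed
    then obtain k where k: "k \<in> I" "\<forall>X'\<in>(`) r ` \<X>. k \<in> X'" by blast
    have "k \<in> (\<lambda>x. if x = l then p else x) ` X" if "X \<in> \<X>" for X
      using k(2) that unfolding r_def by blast
    with less.prems(3,4) k(1) show ?thesis by (rule common_node_from_retract_leaf[OF less.prems(1) leaf])
  qed
qed

section \<open>Balanced separators from tree decompositions\<close>

lemma majority_subsets_intersect:
  assumes "finite U" "A \<subseteq> U" "B \<subseteq> U" "card U < 2 * card A" "card U < 2 * card B"
  shows "A \<inter> B \<noteq> {}"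
proof
  assume "A \<inter> B = {}"
  then have "card A + card B = card (A \<union> B)"
    using finite_subset[OF assms(2,1)] finite_subset[OF assms(3,1)] by (simp add: card_Un_disjoint)
  also have "\<dots> \<le> card U" using assms(1-3) by (intro card_mono) auto
  finally show False using assms(4,5) by linarith
qed

context
  fixes V E I F B
  assumes td: "tree_decomposition V E I F B"
begin

lemma td_tree_on: "tree_on I F"
  using td unfolding tree_decomposition_def by (blast intro: is_tree_imp_tree_on)

lemma td_vertex_in_bag: "v \<in> V \<Longrightarrow> \<exists>i\<in>I. v \<in> B i"
  using td unfolding tree_decomposition_def by blast

lemma td_edge_in_bag: "e \<in> E \<Longrightarrow> \<exists>i\<in>I. e \<subseteq> B i"
  using td unfolding tree_decomposition_def by blast

lemma td_connected_occurrences: "v \<in> V \<Longrightarrow> connected_on {i\<in>I. v \<in> B i} F"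
  using td unfolding tree_decomposition_def by (blast intro: connected_graph_imp_connected_on)

lemma td_bag_subset: "i \<in> I \<Longrightarrow> B i \<subseteq> V"
  using td unfolding tree_decomposition_def by blast

lemma adj_in_rtranclp_between_occurrences:
  assumes "v \<in> V" "i \<in> I" "j \<in> I" "v \<in> B i" "v \<in> B j" "{j\<in>I. v \<in> B j} \<subseteq> X"
  shows "(adj_in X F)\<^sup>*\<^sup>* i j"
proof -
  have "(adj_in {j\<in>I. v \<in> B j} F)\<^sup>*\<^sup>* i j"
    using td_connected_occurrences[OF assms(1)] assms(2-5) unfolding connected_on_def by blast
  then show ?thesis by (rule adj_in_rtranclp_mono[OF assms(6)])
qed

lemma adj_in_rtranclp_bags_along_component:
  assumes W: "W \<subseteq> V" and x: "j0 \<in> I" "x \<in> B j0" and "(adj_in W E)\<^sup>*\<^sup>* x v"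
  defines "X \<equiv> {j\<in>I. B j \<inter> graph_component E W x \<noteq> {}}"
  shows "\<forall>j\<in>I. v \<in> B j \<longrightarrow> (adj_in X F)\<^sup>*\<^sup>* j0 j"
proof -
  have occurrences: "{j\<in>I. v \<in> B j} \<subseteq> X" if "v \<in> graph_component E W x" for v
    using that unfolding X_def by blast
  from assms(4) show ?thesis
  proof (induction rule: rtranclp_induct)
    case base
    have "x \<in> V" using td_bag_subset x by blast
    then show ?case
      using adj_in_rtranclp_between_occurrences x occurrences[OF graph_component_self] by blast
  next
    case (step v v')
    have e: "{v, v'} \<in> E" "v' \<in> W" using step.hyps(2) by (auto simp: adj_in_def)
    obtain j1 where j1: "j1 \<in> I" "{v, v'} \<subseteq> B j1" using td_edge_in_bag[OF e(1)] by blast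
    have "(adj_in X F)\<^sup>*\<^sup>* j0 j1" using step.IH j1 by blast
    moreover have "v' \<in> graph_component E W x"
      using step.hyps unfolding graph_component_def by (simp add: rtranclp.rtrancl_into_rtrancl)
    ultimately show ?case
      using adj_in_rtranclp_between_occurrences[of v' j1] occurrences W e(2) j1
      by (meson insert_subset rtranclp_trans subsetD)
  qed
qed

lemma connected_on_bags_meeting_component:
  assumes W: "W \<subseteq> V" "x \<in> W"
  shows "connected_on {j\<in>I. B j \<inter> graph_component E W x \<noteq> {}} F"
proof -
  define X where "X = {j\<in>I. B j \<inter> graph_component E W x \<noteq> {}}"
  obtain j0 where j0: "j0 \<in> I" "x \<in> B j0" using td_vertex_in_bag W by blast
  have reach: "(adj_in X F)\<^sup>*\<^sup>* j0 j" if "j \<in> X" for j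
  proof -
    obtain v where "j \<in> I" "v \<in> B j" "(adj_in W E)\<^sup>*\<^sup>* x v"
      using \<open>j \<in> X\<close> unfolding X_def graph_component_def by blast
    then show ?thesis
      using adj_in_rtranclp_bags_along_component[OF W(1) j0] unfolding X_def by blast
  qed
  have "j0 \<in> X" unfolding X_def using j0 graph_component_self[of x E W] by blast
  moreover have "(adj_in X F)\<^sup>*\<^sup>* a b" if "a \<in> X" "b \<in> X" for a b
    using rtranclp_trans[OF adj_in_rtranclp_sym[OF reach[OF that(1)]] reach[OF that(2)]] .
  ultimately show ?thesis unfolding connected_on_def X_def by blast
qed

text \<open>If no bag restricted to U is such a separator, every bag misses a component of U minus
  the bag with more than half of the vertices of U. Any two of these components meet, so the sets
  of bags meeting them are pairwise intersecting subtrees; by the Helly property some bag meets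
  its own component, which it misses by construction.\<close>

lemma balanced_separator:
  assumes bag_card: "\<And>i. i \<in> I \<Longrightarrow> card (B i) \<le> w + 1" and finV: "finite V" and U: "U \<subseteq> V"
  obtains S where "S \<subseteq> U" "card S \<le> w + 1"
    "\<And>x. x \<in> U - S \<Longrightarrow> 2 * card (graph_component E (U - S) x) \<le> card U"
proof (rule ccontr)
  assume "\<not> thesis"
  then have no_separator: "\<not> (S \<subseteq> U \<and> card S \<le> w + 1 \<and>
      (\<forall>x\<in>U - S. 2 * card (graph_component E (U - S) x) \<le> card U))" for S
    using that by blast
  have finU: "finite U" using U finV finite_subset by blast
  have "\<exists>x\<in>U - B i. card U < 2 * card (graph_component E (U - B i) x)" if i: "i \<in> I" for i
  proof -
    have "card (U \<inter> B i) \<le> card (B i)"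
      using card_mono[OF finite_subset[OF td_bag_subset[OF i] finV], of "U \<inter> B i"] by blast
    then have "card (U \<inter> B i) \<le> w + 1" using bag_card[OF i] by linarith
    moreover have "U - (U \<inter> B i) = U - B i" by blast
    ultimately show ?thesis using no_separator[of "U \<inter> B i"] by (auto simp: not_le)
  qed
  then obtain x where x: "\<And>i. i \<in> I \<Longrightarrow> x i \<in> U - B i \<and> card U < 2 * card (graph_component E (U - B i) (x i))"
    by metis
  define C where "C i = graph_component E (U - B i) (x i)" for i
  have CU: "C i \<subseteq> U - B i" if "i \<in> I" for i
    unfolding C_def using graph_component_subset x[OF that] by blast
  define X where "X i = {j\<in>I. B j \<inter> C i \<noteq> {}}" for i
  have "\<exists>k\<in>I. \<forall>Y\<in>X ` I. k \<in> Y"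
  proof (rule helly_subtrees[OF td_tree_on])
    fix Y assume "Y \<in> X ` I"
    then obtain i where i: "i \<in> I" "Y = X i" by blast
    show "Y \<subseteq> I" using i unfolding X_def by blast
    show "connected_on Y F" unfolding i(2) X_def C_def
      by (rule connected_on_bags_meeting_component) (use U x[OF i(1)] in auto)
  next
    fix Y Z assume "Y \<in> X ` I" "Z \<in> X ` I"
    then obtain i j where ij: "i \<in> I" "j \<in> I" "Y = X i" "Z = X j" by blast
    have "C i \<inter> C j \<noteq> {}"
    proof (rule majority_subsets_intersect[OF finU])
      show "C i \<subseteq> U" "C j \<subseteq> U" using CU ij(1,2) by blast+
      show "card U < 2 * card (C i)" "card U < 2 * card (C j)"
        using x ij(1,2) unfolding C_def by blast+
    qed
    then obtain v where v: "v \<in> C i" "v \<in> C j" by blast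
    then have "v \<in> V" using CU ij U by blast
    then obtain k where "k \<in> I" "v \<in> B k" using td_vertex_in_bag by blast
    then show "Y \<inter> Z \<noteq> {}" using v ij unfolding X_def by blast
  qed
  then obtain k where "k \<in> I" "k \<in> X k" by blast
  then show False using CU[OF \<open>k \<in> I\<close>] unfolding X_def by blast
qed

end

section \<open>Certifying non-edges along geodesics\<close>

definition closed_nbhd :: "nat set set \<Rightarrow> nat \<Rightarrow> nat set" where
  "closed_nbhd E s = insert s {v. {s, v} \<in> E}"

lemma neighbours_subset: "simple_graph V E \<Longrightarrow> s \<in> V \<Longrightarrow> {v. {s, v} \<in> E} \<subseteq> V"
  unfolding simple_graph_def by (auto simp: doubleton_eq_iff)

lemma closed_nbhd_subset: "simple_graph V E \<Longrightarrow> s \<in> V \<Longrightarrow> closed_nbhd E s \<subseteq> V"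
  unfolding closed_nbhd_def using neighbours_subset by blast

lemma card_closed_nbhd_le:
  assumes "simple_graph V E" "s \<in> V"
  shows "card (closed_nbhd E s) \<le> max_degree V E + 1"
proof -
  have finV: "finite V" using assms(1) by (simp add: simple_graph_def)
  then have "finite {v. {s, v} \<in> E}" using neighbours_subset[OF assms] finite_subset by blast
  then have "card (closed_nbhd E s) \<le> degree E s + 1"
    unfolding closed_nbhd_def degree_def by (simp add: card_insert_if)
  moreover have "degree E s \<le> max_degree V E" unfolding max_degree_def using finV assms(2) by simp
  ultimately show ?thesis by linarith
qed

lemma card_UN_closed_nbhd_le:
  assumes "simple_graph V E" "S \<subseteq> V"
  shows "card (\<Union>s\<in>S. closed_nbhd E s) \<le> card S * (max_degree V E + 1)"
proof -
  have "finite S" using assms finite_subset by (auto simp: simple_graph_def)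
  then have "card (\<Union>s\<in>S. closed_nbhd E s) \<le> (\<Sum>s\<in>S. card (closed_nbhd E s))" by (rule card_UN_le)
  also have "\<dots> \<le> card S * (max_degree V E + 1)"
    using sum_bounded_above[of S "\<lambda>s. card (closed_nbhd E s)" "max_degree V E + 1"]
      card_closed_nbhd_le[OF assms(1)] assms(2) by auto
  finally show ?thesis .
qed

lemma non_edge_in_S_set_ends:
  assumes "connected_graph V E" "a \<in> V" "b \<in> V" "a \<noteq> b" "{a, b} \<notin> E"
  shows "{a, b} \<in> S_set V E a b"
  using two_le_gdist_non_edge[OF assms] gdist_refl[OF assms(2)] gdist_refl[OF assms(3)] assms
  unfolding S_set_def non_edges_def by force

text \<open>Past the midpoint of a geodesic the successor s of P ! k certifies the non-edge, since
  d(b, s) + 1 = d - k < k + 1 = d(a, s).\<close>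

lemma non_edge_in_S_set_successor:
  assumes cg: "connected_graph V E" and P: "geodesic V E P a b"
    and ab: "a \<noteq> b" "{a, b} \<notin> E" and k: "Suc k < length P" "gdist V E a b \<le> 2 * k"
  shows "{a, b} \<in> S_set V E a (P ! Suc k)"
proof -
  have V: "a \<in> V" "b \<in> V" "P ! Suc k \<in> V"
    using geodesic_set[OF P] k(1) nth_mem by blast+
  have "gdist V E a (P ! Suc k) = Suc k" "gdist V E b (P ! Suc k) = gdist V E a b - Suc k"
    using gdist_along_geodesic[OF cg P k(1)] gdist_commute[OF cg V(3,2)] by auto
  moreover have "{a, b} \<in> non_edges V E" using V ab unfolding non_edges_def by blast
  ultimately show ?thesis
    unfolding S_set_def using k gdist_refl[OF V(1)] P unfolding geodesic_def
    by (intro CollectI conjI exI[of _ a] exI[of _ b] disjI1) auto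
qed

lemma non_edge_in_S_set_predecessor:
  assumes cg: "connected_graph V E" and P: "geodesic V E P a b"
    and ab: "a \<noteq> b" "{a, b} \<notin> E" and k: "Suc k < length P" "2 * Suc k < gdist V E a b"
  shows "{a, b} \<in> S_set V E (P ! k) b"
proof -
  have V: "a \<in> V" "b \<in> V" "P ! k \<in> V"
    using geodesic_set[OF P] k(1) nth_mem Suc_lessD by blast+
  have "gdist V E (P ! k) a = k" "gdist V E (P ! k) b = gdist V E a b - k"
    using gdist_along_geodesic[OF cg P Suc_lessD[OF k(1)]] gdist_commute[OF cg V(1,3)] by auto
  moreover have "{a, b} \<in> non_edges V E" using V ab unfolding non_edges_def by blast
  ultimately show ?thesis
    unfolding S_set_def using k gdist_refl[OF V(2)] P unfolding geodesic_def
    by (intro CollectI conjI exI[of _ a] exI[of _ b] disjI1) auto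
qed

lemma geodesic_non_edge_covered_near:
  assumes cg: "connected_graph V E" and P: "geodesic V E P a b"
    and ab: "a \<noteq> b" "{a, b} \<notin> E" and k: "k < length P"
  shows "\<exists>s\<in>closed_nbhd E (P ! k). {a, b} \<in> S_set V E a s \<or> {a, b} \<in> S_set V E s b"
proof -
  have PV: "P \<noteq> []" "a \<in> V" "b \<in> V" using geodesic_set[OF P] by blast+
  have len: "length P = gdist V E a b + 1" using P unfolding geodesic_def by simp
  have edge: "{P ! j, P ! Suc j} \<in> E" if "Suc j < length P" for j
    using P that unfolding geodesic_def is_walk_def by simp
  have ends: "{a, b} \<in> S_set V E a b" using non_edge_in_S_set_ends[OF cg PV(2,3) ab] .
  have "k = gdist V E a b \<or> k = 0 \<or> (Suc k < length P \<and> gdist V E a b \<le> 2 * k) \<or>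
        (\<exists>k'. k = Suc k' \<and> 2 * k < gdist V E a b)"
    using k len by (cases k) auto
  then consider "k = gdist V E a b" | "k = 0" | "Suc k < length P" "gdist V E a b \<le> 2 * k"
    | k' where "k = Suc k'" "2 * k < gdist V E a b"
    by blast
  then show ?thesis
  proof cases
    case 1
    then have "P ! k = b" using P PV(1) len unfolding geodesic_def by (simp add: last_conv_nth)
    then show ?thesis using ends unfolding closed_nbhd_def by blast
  next
    case 2
    then have "P ! k = a" using P PV(1) unfolding geodesic_def by (simp add: hd_conv_nth)
    then show ?thesis using ends unfolding closed_nbhd_def by blast
  next
    case 3
    then have "{a, b} \<in> S_set V E a (P ! Suc k)" by (rule non_edge_in_S_set_successor[OF cg P ab])
    moreover have "P ! Suc k \<in> closed_nbhd E (P ! k)" using edge[OF 3(1)] unfolding closed_nbhd_def by simp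
    ultimately show ?thesis by blast
  next
    case (4 k')
    then have "{a, b} \<in> S_set V E (P ! k') b"
      using k by (intro non_edge_in_S_set_predecessor[OF cg P ab]) simp_all
    moreover have "P ! k' \<in> closed_nbhd E (P ! k)"
      using edge[of k'] k 4(1) unfolding closed_nbhd_def by (simp add: insert_commute)
    ultimately show ?thesis by blast
  qed
qed

definition covers_geodesics_in :: "nat set \<Rightarrow> nat set set \<Rightarrow> nat set \<Rightarrow> (nat \<times> nat) set \<Rightarrow> bool" where
  "covers_geodesics_in V E U T \<longleftrightarrow>
     (\<forall>a b P. a \<noteq> b \<and> {a, b} \<notin> E \<and> geodesic V E P a b \<and> set P \<subseteq> U \<longrightarrow>
        (\<exists>(u, v)\<in>T. {a, b} \<in> S_set V E u v))"

lemma covers_geodesics_in_separator_step: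
  assumes cg: "connected_graph V E" and "S \<subseteq> U"
    and comps: "\<And>C. C \<in> graph_component E (U - S) ` (U - S) \<Longrightarrow> covers_geodesics_in V E C (T C)"
  defines "N \<equiv> \<Union>s\<in>S. closed_nbhd E s"
  shows "covers_geodesics_in V E U
           (U \<times> N \<union> N \<times> U \<union> (\<Union>C\<in>graph_component E (U - S) ` (U - S). T C))"
  unfolding covers_geodesics_in_def
proof (intro allI impI)
  fix a b P assume "a \<noteq> b \<and> {a, b} \<notin> E \<and> geodesic V E P a b \<and> set P \<subseteq> U"
  then have P: "geodesic V E P a b" "set P \<subseteq> U" and ab: "a \<noteq> b" "{a, b} \<notin> E" by blast+
  have "P \<noteq> []" using geodesic_set(1)[OF P(1)] .
  then have "a \<in> set P" "b \<in> set P" using P(1) unfolding geodesic_def by auto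
  then have aU: "a \<in> U" and bU: "b \<in> U" using P(2) by blast+
  show "\<exists>(u, v)\<in>U \<times> N \<union> N \<times> U \<union> (\<Union>C\<in>graph_component E (U - S) ` (U - S). T C).
          {a, b} \<in> S_set V E u v"
  proof (cases "\<exists>k<length P. P ! k \<in> S")
    case True
    then obtain k where k: "k < length P" "P ! k \<in> S" by blast
    obtain s where s: "s \<in> closed_nbhd E (P ! k)" "{a, b} \<in> S_set V E a s \<or> {a, b} \<in> S_set V E s b"
      using geodesic_non_edge_covered_near[OF cg P(1) ab k(1)] by blast
    have "s \<in> N" unfolding N_def using s(1) k(2) by blast
    then show ?thesis using s(2) aU bU by blast
  next
    case False
    then have PW: "set P \<subseteq> U - S" using P(2) by (auto simp: in_set_conv_nth)
    have "a \<in> U - S" using PW \<open>a \<in> set P\<close> by blast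
    have "is_walk (U - S) E P" using P(1) PW unfolding geodesic_def is_walk_def by blast
    then have "set P \<subseteq> graph_component E (U - S) a"
      using is_walk_set_subset_graph_component P(1) unfolding geodesic_def by blast
    then have "\<exists>(u, v)\<in>T (graph_component E (U - S) a). {a, b} \<in> S_set V E u v"
      using comps[of "graph_component E (U - S) a"] \<open>a \<in> U - S\<close> P(1) ab
      unfolding covers_geodesics_in_def by blast
    then show ?thesis using \<open>a \<in> U - S\<close> by blast
  qed
qed

lemma card_pairs_with_closed_nbhd_le:
  assumes "simple_graph V E" "S \<subseteq> V"
  defines "N \<equiv> \<Union>s\<in>S. closed_nbhd E s"
  shows "card (U \<times> N \<union> N \<times> U) \<le> 2 * card U * card S * (max_degree V E + 1)"
proof -
  have "card (U \<times> N \<union> N \<times> U) \<le> 2 * card U * card N"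
    using card_Un_le[of "U \<times> N" "N \<times> U"] by (simp add: card_cartesian_product algebra_simps)
  also have "\<dots> \<le> 2 * card U * (card S * (max_degree V E + 1))"
    using card_UN_closed_nbhd_le[OF assms(1,2)] unfolding N_def by (intro mult_le_mono2)
  finally show ?thesis by (simp only: mult.assoc)
qed

lemma card_Un_UN_le_log:
  fixes K :: real and n :: nat and T :: "'a set \<Rightarrow> 'b set"
  assumes "finite \<C>" "0 \<le> K" "0 < n" "(\<Sum>C\<in>\<C>. card C) \<le> n" "real (card T0) \<le> K * n"
    and "\<And>C. C \<in> \<C> \<Longrightarrow> 0 < card C \<and> 2 * card C \<le> n"
    and "\<And>C. C \<in> \<C> \<Longrightarrow> real (card (T C)) \<le> K * card C * (log 2 (card C) + 1)"
  shows "real (card (T0 \<union> (\<Union>C\<in>\<C>. T C))) \<le> K * n * (log 2 n + 1)"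
proof -
  have "card (T0 \<union> (\<Union>C\<in>\<C>. T C)) \<le> card T0 + card (\<Union>C\<in>\<C>. T C)" by (rule card_Un_le)
  also have "card (\<Union>C\<in>\<C>. T C) \<le> (\<Sum>C\<in>\<C>. card (T C))" using assms(1) by (rule card_UN_le)
  finally have "real (card (T0 \<union> (\<Union>C\<in>\<C>. T C))) \<le> card T0 + (\<Sum>C\<in>\<C>. real (card (T C)))"
    by (simp flip: of_nat_sum add: of_nat_le_iff)
  also have "(\<Sum>C\<in>\<C>. real (card (T C))) \<le> (\<Sum>C\<in>\<C>. K * card C * log 2 n)"
  proof (rule sum_mono)
    fix C assume C: "C \<in> \<C>"
    have "log 2 (card C) + 1 = log 2 (2 * card C)" using assms(6)[OF C] by (simp add: log_mult)
    also have "\<dots> \<le> log 2 n" using assms(6)[OF C] by simp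
    finally show "real (card (T C)) \<le> K * card C * log 2 n"
      using assms(7)[OF C] mult_left_mono[of _ _ "K * card C"] assms(2) by fastforce
  qed
  also have "\<dots> = K * log 2 n * (\<Sum>C\<in>\<C>. card C)"
    by (simp add: sum_distrib_left sum_distrib_right algebra_simps)
  also have "\<dots> \<le> K * log 2 n * n"
    using assms(2-4) by (intro mult_left_mono) (auto simp flip: of_nat_sum)
  finally show ?thesis using assms(5) by (simp add: algebra_simps)
qed

lemma geodesic_cover_step:
  fixes V :: "nat set" and E :: "nat set set" and w :: nat and K :: real
  defines "K \<equiv> 2 * (real w + 1) * (real (max_degree V E) + 1)"
  assumes sg: "simple_graph V E" and cg: "connected_graph V E"
    and U: "U \<subseteq> V" "U \<noteq> {}" and S: "S \<subseteq> U" "card S \<le> w + 1"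
    and halves: "\<And>C. C \<in> graph_component E (U - S) ` (U - S) \<Longrightarrow> 2 * card C \<le> card U"
    and recursion: "\<And>C. C \<in> graph_component E (U - S) ` (U - S) \<Longrightarrow>
           \<exists>T\<subseteq>V \<times> V. covers_geodesics_in V E C T \<and> real (card T) \<le> K * card C * (log 2 (card C) + 1)"
  shows "\<exists>T\<subseteq>V \<times> V. covers_geodesics_in V E U T \<and> real (card T) \<le> K * card U * (log 2 (card U) + 1)"
proof -
  define \<C> where "\<C> = graph_component E (U - S) ` (U - S)"
  have finU: "finite U" using U(1) sg finite_subset unfolding simple_graph_def by blast
  have C_pos: "0 < card C" if C: "C \<in> \<C>" for C
  proof -
    obtain x where x: "x \<in> U - S" "C = graph_component E (U - S) x" using C unfolding \<C>_def by blast
    then have "C \<subseteq> U" "x \<in> C" using graph_component_subset[OF x(1)] graph_component_self by blast+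
    then show ?thesis using finU finite_subset by (auto simp: card_gt_0_iff)
  qed
  have "\<forall>C\<in>\<C>. \<exists>T\<subseteq>V \<times> V. covers_geodesics_in V E C T \<and>
                     real (card T) \<le> K * card C * (log 2 (card C) + 1)"
    using recursion unfolding \<C>_def by blast
  then obtain T where T: "\<forall>C\<in>\<C>. T C \<subseteq> V \<times> V \<and> covers_geodesics_in V E C (T C) \<and>
                              real (card (T C)) \<le> K * card C * (log 2 (card C) + 1)"
    by (rule bchoice[THEN exE])
  define N where "N = (\<Union>s\<in>S. closed_nbhd E s)"
  have "card (U \<times> N \<union> N \<times> U) \<le> 2 * card U * card S * (max_degree V E + 1)"
    unfolding N_def using S(1) U(1) by (intro card_pairs_with_closed_nbhd_le[OF sg]) auto
  also have "\<dots> \<le> 2 * card U * (w + 1) * (max_degree V E + 1)"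
    using S(2) by (intro mult_le_mono1 mult_le_mono2)
  finally have "real (card (U \<times> N \<union> N \<times> U)) \<le> real (2 * card U * (w + 1) * (max_degree V E + 1))"
    by (simp only: of_nat_le_iff)
  also have "\<dots> = K * card U" unfolding K_def by (simp add: algebra_simps)
  finally have level: "real (card (U \<times> N \<union> N \<times> U)) \<le> K * card U" .
  define T' where "T' = U \<times> N \<union> N \<times> U \<union> (\<Union>C\<in>\<C>. T C)"
  have bound: "real (card T') \<le> K * card U * (log 2 (card U) + 1)"
    unfolding T'_def
  proof (rule card_Un_UN_le_log[OF _ _ _ _ level])
    show "finite \<C>" "0 \<le> K" "0 < card U"
      unfolding \<C>_def K_def using finU U(2) by (simp_all add: card_gt_0_iff)
    have "(\<Sum>C\<in>\<C>. card C) = card (U - S)"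
      unfolding \<C>_def using finU by (simp add: sum_card_graph_components)
    then show "(\<Sum>C\<in>\<C>. card C) \<le> card U" using finU by (simp add: card_mono)
    show "0 < card C \<and> 2 * card C \<le> card U" if "C \<in> \<C>" for C
      using C_pos halves that unfolding \<C>_def by blast
    show "real (card (T C)) \<le> K * card C * (log 2 (card C) + 1)" if "C \<in> \<C>" for C
      using T that by blast
  qed
  have "N \<subseteq> V" unfolding N_def using closed_nbhd_subset[OF sg] S(1) U(1) by blast
  moreover have "(\<Union>C\<in>\<C>. T C) \<subseteq> V \<times> V" using T by (intro UN_least) blast
  ultimately have TV: "T' \<subseteq> V \<times> V" unfolding T'_def using U(1) by auto
  have cover: "covers_geodesics_in V E U T'"
    unfolding T'_def N_def \<C>_def
  proof (rule covers_geodesics_in_separator_step[OF cg S(1)])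
    fix C assume "C \<in> graph_component E (U - S) ` (U - S)"
    then have "C \<in> \<C>" unfolding \<C>_def .
    with T show "covers_geodesics_in V E C (T C)" by blast
  qed
  from TV cover bound show ?thesis by blast
qed

lemma geodesic_cover_exists:
  assumes sg: "simple_graph V E" and cg: "connected_graph V E"
    and td: "tree_decomposition V E I F B" and bag_card: "\<And>i. i \<in> I \<Longrightarrow> card (B i) \<le> w + 1"
    and "U \<subseteq> V" "U \<noteq> {}"
  shows "\<exists>T\<subseteq>V \<times> V. covers_geodesics_in V E U T \<and>
           real (card T) \<le> 2 * (real w + 1) * (real (max_degree V E) + 1) * card U * (log 2 (card U) + 1)"
  using assms(5,6)
proof (induction "card U" arbitrary: U rule: less_induct)
  case less
  have finV: "finite V" using sg by (simp add: simple_graph_def)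
  have finU: "finite U" using less.prems(1) finV finite_subset by blast
  obtain S where S: "S \<subseteq> U" "card S \<le> w + 1"
    "\<And>x. x \<in> U - S \<Longrightarrow> 2 * card (graph_component E (U - S) x) \<le> card U"
    using balanced_separator[OF td bag_card finV less.prems(1)] by blast
  show ?case
  proof (rule geodesic_cover_step[OF sg cg less.prems S(1,2)])
    fix C assume "C \<in> graph_component E (U - S) ` (U - S)"
    then obtain x where x: "x \<in> U - S" "C = graph_component E (U - S) x" by blast
    then show half: "2 * card C \<le> card U" using S(3) by simp
    have "C \<subseteq> U" "x \<in> C" using graph_component_subset[OF x(1)] graph_component_self x(2) by blast+
    then have "0 < card C" using finU finite_subset by (auto simp: card_gt_0_iff)
    then have "card C < card U" using half by linarith
    then show "\<exists>T\<subseteq>V \<times> V. covers_geodesics_in V E C T \<and>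
        real (card T) \<le> 2 * (real w + 1) * (real (max_degree V E) + 1) * card C * (log 2 (card C) + 1)"
      by (rule less.hyps) (use less.prems(1) \<open>C \<subseteq> U\<close> \<open>x \<in> C\<close> in auto)
  qed
qed

lemma OPT_le_card:
  assumes "T \<subseteq> V \<times> V" "finite T" "(\<Union>(u, v)\<in>T. S_set V E u v) = non_edges V E"
  shows "OPT V E \<le> card T"
  unfolding OPT_def by (rule Least_le) (use assms in blast)

lemma covers_geodesics_in_imp_covers_non_edges:
  assumes "connected_graph V E" "covers_geodesics_in V E V T"
  shows "(\<Union>(u, v)\<in>T. S_set V E u v) = non_edges V E"
proof
  show "(\<Union>(u, v)\<in>T. S_set V E u v) \<subseteq> non_edges V E" unfolding S_set_def by blast
  show "non_edges V E \<subseteq> (\<Union>(u, v)\<in>T. S_set V E u v)"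
  proof
    fix q assume "q \<in> non_edges V E"
    then obtain a b where ab: "q = {a, b}" "a \<in> V" "b \<in> V" "a \<noteq> b" "{a, b} \<notin> E"
      unfolding non_edges_def by blast
    obtain P where P: "geodesic V E P a b" using geodesic_exists[OF assms(1) ab(2,3)] .
    then have "\<exists>(u, v)\<in>T. {a, b} \<in> S_set V E u v"
      using assms(2) geodesic_set(2)[OF P] ab(4,5) unfolding covers_geodesics_in_def by blast
    then show "q \<in> (\<Union>(u, v)\<in>T. S_set V E u v)" using ab(1) by blast
  qed
qed

lemma OPT_eq_0_if_card_le_1:
  assumes "finite V" "card V \<le> 1"
  shows "OPT V E = 0"
proof -
  have "non_edges V E = {}"
    using assms card_le_Suc0_iff_eq[OF assms(1)] unfolding non_edges_def by auto
  then show ?thesis using OPT_le_card[of "{}" V E] by simp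
qed

lemma connected_graph_singleton: "connected_graph {x} {}"
  unfolding connected_graph_def
proof (intro conjI ballI)
  fix u v assume "u \<in> {x}" "v \<in> {x}"
  then show "\<exists>xs. is_walk {x} {} xs \<and> hd xs = u \<and> last xs = v"
    by (intro exI[of _ "[x]"]) (simp add: is_walk_def)
qed simp

lemma treewidth_attained:
  assumes "simple_graph V E"
  obtains I F B where "tree_decomposition V E I F B" "decomposition_width I B = treewidth V E"
proof -
  have "is_tree {0} {}"
    unfolding is_tree_def using connected_graph_singleton by (simp add: simple_graph_def)
  moreover have "\<forall>e\<in>E. \<exists>i\<in>{0::nat}. e \<subseteq> V" using edge_subset_vertices[OF assms] by blast
  moreover have "connected_graph {i \<in> {0::nat}. v \<in> V} {}" if "v \<in> V" for v
    using that connected_graph_singleton by simp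
  ultimately have "tree_decomposition V E {0} {} (\<lambda>_. V)"
    unfolding tree_decomposition_def by simp
  then have "\<exists>w I F B. tree_decomposition V E I F B \<and> decomposition_width I B = w"
    by blast
  then have "\<exists>I F B. tree_decomposition V E I F B \<and> decomposition_width I B = treewidth V E"
    unfolding treewidth_def by (rule LeastI_ex)
  then show ?thesis using that by blast
qed

lemma card_bag_le_width:
  assumes "finite I" "i \<in> I"
  shows "card (B i) \<le> decomposition_width I B + 1"
proof -
  have "card (B i) \<le> Max ((\<lambda>i. card (B i)) ` I)" using assms by simp
  then show ?thesis unfolding decomposition_width_def by linarith
qed

theorem OPT_le_treewidth_bound:
  assumes sg: "simple_graph V E" and cg: "connected_graph V E"
  shows "real (OPT V E) \<le> 2 * (real (treewidth V E) + 1) * (real (max_degree V E) + 1) *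
            card V * (log 2 (card V) + 1)"
proof -
  obtain I F B where td: "tree_decomposition V E I F B"
    and width: "decomposition_width I B = treewidth V E"
    using treewidth_attained[OF sg] .
  have "finite I" using td unfolding tree_decomposition_def is_tree_def simple_graph_def by blast
  then have bags: "card (B i) \<le> treewidth V E + 1" if "i \<in> I" for i
    using card_bag_le_width[OF \<open>finite I\<close> that, of B] width by simp
  have "V \<noteq> {}" using cg unfolding connected_graph_def by blast
  then obtain T where T: "T \<subseteq> V \<times> V" "covers_geodesics_in V E V T"
    "real (card T) \<le> 2 * (real (treewidth V E) + 1) * (real (max_degree V E) + 1) *
       card V * (log 2 (card V) + 1)"
    using geodesic_cover_exists[OF sg cg td bags subset_refl \<open>V \<noteq> {}\<close>] by blast
  have "finite V" using sg unfolding simple_graph_def by blast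
  then have "finite T" using finite_subset[OF T(1)] by simp
  then have "OPT V E \<le> card T"
    by (rule OPT_le_card[OF T(1) _ covers_geodesics_in_imp_covers_non_edges[OF cg T(2)]])
  then show ?thesis using T(3) by linarith
qed

lemma max_degree_ge_1:
  assumes sg: "simple_graph V E" and cg: "connected_graph V E" and "2 \<le> card V"
  shows "1 \<le> max_degree V E"
proof -
  have finV: "finite V" using sg by (simp add: simple_graph_def)
  have "\<not> V \<subseteq> {a}" for a using assms(3) card_mono[of "{a}" V] by auto
  then obtain a b where ab: "a \<in> V" "b \<in> V" "a \<noteq> b"
    using cg unfolding connected_graph_def by blast
  obtain P where P: "geodesic V E P a b" using geodesic_exists[OF cg ab(1,2)] .
  then obtain y P' where P': "P = a # y # P'"
    using ab(3) unfolding geodesic_def by (cases P rule: remdups_adj.cases) auto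
  then have "{a, y} \<in> E" using P unfolding geodesic_def is_walk_def by force
  then have "y \<in> {v. {a, v} \<in> E}" by simp
  moreover have "finite {v. {a, v} \<in> E}"
    using neighbours_subset[OF sg ab(1)] finV finite_subset by blast
  ultimately have "1 \<le> degree E a" unfolding degree_def by (simp add: Suc_le_eq card_gt_0_iff) blast
  also have "degree E a \<le> max_degree V E" unfolding max_degree_def using finV ab(1) by simp
  finally show ?thesis .
qed

lemma log2_bound_le_ln_bound:
  fixes n D w :: real
  assumes n: "2 \<le> n" and D: "1 \<le> D" and w: "0 \<le> w"
  shows "2 * (w + 1) * (D + 1) * n * (log 2 n + 1) \<le> 8 / (ln 2)\<^sup>2 * D * (D + w * ln n) * n * ln n"
proof -
  have l2: "0 < ln (2::real)" "ln (2::real) < 1" "ln 2 \<le> ln n" using n ln_2_less_1 by auto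
  have "log 2 n + 1 \<le> 2 * ln n / ln 2" using l2 by (simp add: log_def field_simps)
  moreover have "D + 1 \<le> 2 * D" using D by simp
  moreover have "0 \<le> log 2 n + 1" using n by simp
  ultimately have "(D + 1) * (log 2 n + 1) \<le> (2 * D) * (2 * ln n / ln 2)"
    using D by (intro mult_mono) auto
  then have "(2 * (w + 1) * n) * ((D + 1) * (log 2 n + 1)) \<le> (2 * (w + 1) * n) * ((2 * D) * (2 * ln n / ln 2))"
    using w n by (intro mult_left_mono) auto
  also have "\<dots> = 8 / (ln 2)\<^sup>2 * D * n * ln n * (ln 2 * (w + 1))"
    using l2 by (simp add: field_simps power2_eq_square)
  also have "\<dots> \<le> 8 / (ln 2)\<^sup>2 * D * n * ln n * (D + w * ln n)"
  proof (rule mult_left_mono)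
    show "ln 2 * (w + 1) \<le> D + w * ln n"
      using l2 D mult_left_mono[OF l2(3) w] by (simp add: algebra_simps)
    show "0 \<le> 8 / (ln 2)\<^sup>2 * D * n * ln n" using D n l2 by simp
  qed
  finally show ?thesis by (simp add: algebra_simps)
qed

theorem theorem7:
  "\<exists>C::real. C > 0 \<and>
     (\<forall>(V::nat set) (E::nat set set). simple_graph V E \<and> connected_graph V E \<longrightarrow>
        real (OPT V E) \<le> C * real (max_degree V E) *
          (real (max_degree V E) + real (treewidth V E) * ln (real (card V))) *
          real (card V) * ln (real (card V)))"
proof (intro exI[of _ "8 / (ln 2)\<^sup>2"] conjI allI impI)
  fix V :: "nat set" and E :: "nat set set"
  assume "simple_graph V E \<and> connected_graph V E"
  then have sg: "simple_graph V E" and cg: "connected_graph V E" by auto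
  show "real (OPT V E) \<le> 8 / (ln 2)\<^sup>2 * real (max_degree V E) *
          (real (max_degree V E) + real (treewidth V E) * ln (real (card V))) *
          real (card V) * ln (real (card V))"
  proof (cases "2 \<le> card V")
    case True
    then have "2 \<le> real (card V)" "1 \<le> real (max_degree V E)"
      using max_degree_ge_1[OF sg cg] by simp_all
    from log2_bound_le_ln_bound[OF this of_nat_0_le_iff[of "treewidth V E"]] show ?thesis
      using OPT_le_treewidth_bound[OF sg cg] by linarith
  next
    case False
    then have "OPT V E = 0" using OPT_eq_0_if_card_le_1 sg unfolding simple_graph_def by simp
    moreover have "card V = 0 \<or> card V = 1" using False by linarith
    ultimately show ?thesis by auto
  qed
qed simp

end
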